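(* The function $f$ on permutations defined by $f(\alpha)=c(\sigma_m^{-1}\alpha)$ for $\alpha\in\mathbb{S}_m$ (the number of faces, i.e. boundary components, of the hypermap of $\alpha$) satisfies the generalized Vassiliev relations in the following strong sense: for every generalized Vassiliev element $E(\gamma,q,v)=\sum_{j\in v}(\alpha_{j-1}-\alpha_j)$, the terms can be matched into pairs $(\alpha_{j-1},\alpha_{j'})$ with opposite signs and $f(\alpha_{j-1})=f(\alpha_{j'})$. In particular, for any function $g$ of one integer variable, the linear extension of $\alpha\mapsto g(f(\alpha))$ vanishes on all generalized Vassiliev elements (so the genus of a hyper chord diagram is a generalized weight system).
   Context: $\sigma_m=(1,\dots,m)$; $c(\beta)$ denotes the number of cycles of a permutation $\beta$. Generalized Vassiliev elements: let $m\ge2$, $\gamma\in\mathbb{S}_{m-1}$, $q\in[m-1]\cup\{*\}$. For $t\in\{0,\dots,m-1\}$ let $\alpha_t\in\mathbb{S}_m$ be obtained by inserting a new point $x$ (free leg) into the line $1<\dots<m-1$ in the gap between $t$ and $t+1$, relabeling all points $1,\dots,m$ in order, letting the permutation act as $\gamma$ on old points except $q\mapsto x\mapsto\gamma(q)$ if $q\ne*$, and $x$ fixed if $q=*$. For a cycle $v$ of $\gamma$, $E(\gamma,q,v)=\sum_{j\in v}(\alpha_{j-1}-\alpha_j)\in\mathbb{C}[\mathbb{S}_m]$. *)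

theory Defs
  imports Complex_Main "HOL-Combinatorics.Combinatorics"
begin

text \<open>Permutations of [m] = {1..m} are functions nat => nat permuting {1..m}
  (identity outside).\<close>

definition ncycles :: "nat \<Rightarrow> (nat \<Rightarrow> nat) \<Rightarrow> nat" where
  "ncycles m \<beta> = card ((\<lambda>x. orbit \<beta> x) ` {1..m})"

definition sigma :: "nat \<Rightarrow> nat \<Rightarrow> nat" where
  "sigma m i = (if 1 \<le> i \<and> i < m then i + 1 else if i = m then 1 else i)"

definition faces :: "nat \<Rightarrow> (nat \<Rightarrow> nat) \<Rightarrow> nat" where
  "faces m \<alpha> = ncycles m (inv (sigma m) \<circ> \<alpha>)"

text \<open>Relabelling when the new point is inserted in the gap between t and t+1:
  old point i becomes ins t i, new point is t+1; old t is the inverse.\<close>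
definition ins :: "nat \<Rightarrow> nat \<Rightarrow> nat" where
  "ins t i = (if i \<le> t then i else i + 1)"

definition old :: "nat \<Rightarrow> nat \<Rightarrow> nat" where
  "old t y = (if y \<le> t then y else y - 1)"

text \<open>alpha_t for gamma on {1..m-1} and q (None stands for *).\<close>
definition valpha :: "nat \<Rightarrow> (nat \<Rightarrow> nat) \<Rightarrow> nat option \<Rightarrow> nat \<Rightarrow> nat \<Rightarrow> nat" where
  "valpha m \<gamma> q t y =
    (if y = t + 1 then (case q of None \<Rightarrow> t + 1 | Some q' \<Rightarrow> ins t (\<gamma> q'))
     else if 1 \<le> y \<and> y \<le> m then
       (if q = Some (old t y) then t + 1 else ins t (\<gamma> (old t y)))
     else y)"

end

theory Submission
  imports Defs
begin

text \<open>
  Relabel the points so that the free leg of \<alpha>_t becomes 0 while the old points 1..n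
  (n = m - 1) keep their labels. Then \<sigma>_m^-1 \<alpha>_t turns into \<rho> (u 0) for q = * and into
  \<rho> (u 0) (0 q) otherwise, where \<rho> = \<sigma>_n^-1 \<gamma> fixes 0 and u = \<gamma>^-1 (t mod n + 1).
  Composing with a transposition merges two cycles or splits one, so f(\<alpha>_t) is c(\<rho>) - 1
  if q = *, and otherwise c(\<rho>) or c(\<rho>) - 2 according to whether q lies in the \<rho>-cycle
  of u. Since \<rho> maps \<gamma>^-1 (k mod n + 1) to k, the terms \<alpha>_(j-1) and \<alpha>_(\<gamma>^-1 j) see
  the same cycle, so \<pi> = \<gamma>^-1 pairs the terms of E(\<gamma>, q, v).
\<close>

definition orbit_count :: "('a \<Rightarrow> 'a) \<Rightarrow> 'a set \<Rightarrow> nat" where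
  "orbit_count p S = card (orbit p ` S)"

lemma orbit_eq_if_in_orbit:
  assumes "permutation p" and "y \<in> orbit p x"
  shows "orbit p y = orbit p x"
  by (meson assms cyclic_on_orbit' orbit_cyclic_eq3)

lemma orbit_subset_orbit_comp_transpose:
  assumes "b \<notin> orbit p a"
  shows "orbit p a \<subseteq> orbit (p \<circ> transpose a b) b"
proof
  fix y assume "y \<in> orbit p a"
  then show "y \<in> orbit (p \<circ> transpose a b) b"
  proof induction
    case base
    have "p a = (p \<circ> transpose a b) b" by simp
    then show ?case by (metis orbit.base)
  next
    case (step y)
    then have "y \<noteq> b" using assms by blast
    show ?case
    proof (cases "y = a")
      case True
      have "p a = (p \<circ> transpose a b) b" by simp
      with True show ?thesis by (metis orbit.base)
    next
      case False
      then have "p y = (p \<circ> transpose a b) y" using \<open>y \<noteq> b\<close> by simp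
      then show ?thesis using step.IH by (metis orbit.step)
    qed
  qed
qed

lemma orbit_comp_transpose_merge:
  assumes "permutation p" and "b \<notin> orbit p a"
  shows "orbit (p \<circ> transpose a b) a = orbit p a \<union> orbit p b"
proof -
  let ?p' = "p \<circ> transpose a b"
  have "permutation ?p'"
    using assms(1) by (simp add: permutation_compose permutation_swap_id)
  have "a \<notin> orbit p b"
    using assms by (metis orbit_eq_if_in_orbit permutation_self_in_orbit)
  then have ob: "orbit p b \<subseteq> orbit ?p' a"
    using orbit_subset_orbit_comp_transpose[of a p b] by (simp add: transpose_commute)
  then have "orbit ?p' b = orbit ?p' a"
    using \<open>permutation ?p'\<close> assms(1)
    by (meson orbit_eq_if_in_orbit permutation_self_in_orbit subsetD)
  then have oa: "orbit p a \<subseteq> orbit ?p' a"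
    using orbit_subset_orbit_comp_transpose[OF assms(2)] by simp
  have "orbit ?p' a \<subseteq> orbit p a \<union> orbit p b"
  proof
    fix y assume "y \<in> orbit ?p' a"
    then show "y \<in> orbit p a \<union> orbit p b"
    proof induction
      case base
      then show ?case by (simp add: orbit.base)
    next
      case (step y)
      then show ?case
        by (cases "y = a \<or> y = b") (auto intro: orbit.intros)
    qed
  qed
  with oa ob show ?thesis by blast
qed

lemma orbit_comp_transpose_disjoint:
  assumes "permutation p" and "a \<notin> orbit p x" and "b \<notin> orbit p x"
  shows "orbit (p \<circ> transpose a b) x = orbit p x"
proof (rule orbit_cong)
  show "x \<in> orbit p x" using assms(1) by (rule permutation_self_in_orbit)
  show "(p \<circ> transpose a b) s = p s" if "s \<in> orbit p x" for s
    using that assms(2,3) by (metis comp_apply transpose_apply_other)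
qed

lemma orbits_comp_transpose_merge:
  assumes "permutation p" and "a \<in> S" and "b \<notin> orbit p a"
  shows "orbit (p \<circ> transpose a b) ` S =
    insert (orbit p a \<union> orbit p b) (orbit p ` S - {orbit p a, orbit p b})"
proof -
  let ?p' = "p \<circ> transpose a b"
  have "permutation ?p'"
    using assms(1) by (simp add: permutation_compose permutation_swap_id)
  have self_in: "x \<in> orbit p x" for x
    using assms(1) by (rule permutation_self_in_orbit)
  have merged: "orbit ?p' x = orbit p a \<union> orbit p b" if "x \<in> orbit p a \<union> orbit p b" for x
    using that orbit_comp_transpose_merge[OF assms(1,3)]
      orbit_eq_if_in_orbit[OF \<open>permutation ?p'\<close>]
    by metis
  have unchanged: "orbit ?p' x = orbit p x"
    and distinct: "orbit p x \<noteq> orbit p a" "orbit p x \<noteq> orbit p b"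
    if "x \<notin> orbit p a \<union> orbit p b" for x
  proof -
    have "a \<notin> orbit p x" "b \<notin> orbit p x"
      using that self_in orbit_eq_if_in_orbit[OF assms(1)] by (metis UnCI)+
    then show "orbit ?p' x = orbit p x"
      by (rule orbit_comp_transpose_disjoint[OF assms(1)])
    show "orbit p x \<noteq> orbit p a" "orbit p x \<noteq> orbit p b"
      using that self_in by auto
  qed
  show ?thesis
  proof (intro set_eqI iffI)
    fix X assume "X \<in> orbit ?p' ` S"
    then obtain x where x: "x \<in> S" "X = orbit ?p' x" by blast
    show "X \<in> insert (orbit p a \<union> orbit p b) (orbit p ` S - {orbit p a, orbit p b})"
    proof (cases "x \<in> orbit p a \<union> orbit p b")
      case True
      then show ?thesis by (simp add: merged x(2))
    next
      case False
      then show ?thesis using unchanged[OF False] distinct[OF False] x by simp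
    qed
  next
    fix X
    assume X: "X \<in> insert (orbit p a \<union> orbit p b) (orbit p ` S - {orbit p a, orbit p b})"
    show "X \<in> orbit ?p' ` S"
    proof (cases "X = orbit p a \<union> orbit p b")
      case True
      have "orbit ?p' a = orbit p a \<union> orbit p b"
        using merged self_in by blast
      then show ?thesis using True assms(2) by (metis imageI)
    next
      case False
      then obtain x where x: "x \<in> S" "X = orbit p x" "X \<noteq> orbit p a" "X \<noteq> orbit p b"
        using X by blast
      then have "x \<notin> orbit p a \<union> orbit p b"
        using orbit_eq_if_in_orbit[OF assms(1), of x] by auto
      then show ?thesis using unchanged x by (metis imageI)
    qed
  qed
qed

lemma orbit_count_comp_transpose_merge:
  assumes "permutation p" and "finite S" and "a \<in> S" and "b \<in> S" and "b \<notin> orbit p a"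
  shows "orbit_count (p \<circ> transpose a b) S + 1 = orbit_count p S"
proof -
  let ?A = "orbit p a" and ?B = "orbit p b" and ?O = "orbit p ` S"
  have "?A \<noteq> ?B"
    using assms(5) permutation_self_in_orbit[OF assms(1), of b] by auto
  then have card_AB: "card {?A, ?B} = 2" by simp
  have "?A \<union> ?B \<notin> ?O - {?A, ?B}"
  proof
    assume "?A \<union> ?B \<in> ?O - {?A, ?B}"
    then obtain x where x: "?A \<union> ?B = orbit p x" "orbit p x \<noteq> ?A" by auto
    have "a \<in> orbit p x"
      using x(1) permutation_self_in_orbit[OF assms(1), of a] by blast
    then show False
      using x(2) orbit_eq_if_in_orbit[OF assms(1)] by simp
  qed
  then have "orbit_count (p \<circ> transpose a b) S = card (?O - {?A, ?B}) + 1"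
    unfolding orbit_count_def orbits_comp_transpose_merge[OF assms(1,3,5)]
    using assms(2) by simp
  moreover have "card (?O - {?A, ?B}) + 2 = card ?O"
  proof -
    have sub: "{?A, ?B} \<subseteq> ?O" using assms(3,4) by blast
    have fin: "finite ?O" using assms(2) by (rule finite_imageI)
    have "card (?O - {?A, ?B}) = card ?O - 2"
      using card_Diff_subset[OF _ sub] card_AB by simp
    moreover have "2 \<le> card ?O"
      using card_mono[OF fin sub] card_AB by simp
    ultimately show ?thesis by simp
  qed
  ultimately show ?thesis
    unfolding orbit_count_def by simp
qed

lemma not_in_orbit_comp_transpose:
  assumes "permutation p" and "a \<noteq> b" and "b \<in> orbit p a"
  shows "b \<notin> orbit (p \<circ> transpose a b) a"
proof -
  have a_in: "a \<in> orbit p a"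
    using assms(1) by (rule permutation_self_in_orbit)
  define L where "L = funpow_dist1 p a a"
  have period: "(p ^^ L) a = a"
    unfolding L_def using a_in by (rule funpow_dist1_prop)
  have inj: "inj_on (\<lambda>i. (p ^^ i) a) {0..<L}"
    unfolding L_def using a_in by (rule inj_on_funpow_dist1)
  obtain j where j: "j < L" "b = (p ^^ j) a"
    using assms(3) orbit_conv_funpow_dist1[OF a_in] L_def by auto
  have "j \<noteq> 0" using j(2) assms(2) by (metis funpow_0)
  \<comment> \<open>From \<open>a\<close>, \<open>p \<circ> transpose a b\<close> jumps to \<open>p b\<close> and then follows \<open>p\<close> back to \<open>a\<close>,
    skipping the arc of the cycle that contains \<open>b\<close>.\<close>
  define W where "W = insert a {(p ^^ i) a | i. j < i \<and> i < L}"
  have step_in_W: "(p ^^ Suc i) a \<in> W" if "j \<le> i" "i < L" for i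
  proof (cases "Suc i = L")
    case True
    then show ?thesis using period by (simp add: W_def)
  next
    case False
    then have "j < Suc i \<and> Suc i < L" using that by simp
    then show ?thesis unfolding W_def by blast
  qed
  have "orbit (p \<circ> transpose a b) a \<subseteq> W"
  proof
    fix y assume "y \<in> orbit (p \<circ> transpose a b) a"
    then show "y \<in> W"
    proof induction
      case base
      show ?case using step_in_W[of j] j by simp
    next
      case (step y)
      then consider "y = a" | i where "y = (p ^^ i) a" "j < i" "i < L"
        unfolding W_def by blast
      then show ?case
      proof cases
        case 1
        then show ?thesis using step_in_W[of j] j by simp
      next
        case 2
        have "y \<noteq> a" "y \<noteq> b"
          using 2 j inj_onD[OF inj, of i 0] inj_onD[OF inj, of i j] by auto
        then show ?thesis using 2 step_in_W[of i] by simp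
      qed
    qed
  qed
  moreover have "b \<notin> W"
    using j \<open>j \<noteq> 0\<close> assms(2) inj_onD[OF inj, of j] unfolding W_def by fastforce
  ultimately show ?thesis by blast
qed

lemma orbit_count_comp_transpose_split:
  assumes "permutation p" and "finite S" and "a \<in> S" and "b \<in> S" and "a \<noteq> b"
    and "b \<in> orbit p a"
  shows "orbit_count (p \<circ> transpose a b) S = orbit_count p S + 1"
proof -
  let ?p' = "p \<circ> transpose a b"
  have "permutation ?p'"
    using assms(1) by (simp add: permutation_compose permutation_swap_id)
  moreover have "b \<notin> orbit ?p' a"
    using not_in_orbit_comp_transpose[OF assms(1,5,6)] .
  moreover have "?p' \<circ> transpose a b = p"
    by (simp add: comp_assoc)
  ultimately show ?thesis
    using orbit_count_comp_transpose_merge[OF _ assms(2-4)] by metis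
qed

lemma orbit_count_comp_transpose_fixed_point:
  assumes "permutation p" and "finite S" and "u \<in> S" and "c \<in> S" and "p c = c" and "u \<noteq> c"
  shows "orbit_count (p \<circ> transpose u c) S + 1 = orbit_count p S"
    and "orbit (p \<circ> transpose u c) c = insert c (orbit p u)"
proof -
  have orbit_c: "orbit p c = {c}"
    using assms(5) by (simp add: orbit_eq_singleton_iff)
  moreover have "u \<in> orbit p u"
    using assms(1) by (rule permutation_self_in_orbit)
  ultimately have c_notin: "c \<notin> orbit p u"
    using assms(6) orbit_eq_if_in_orbit[OF assms(1)] by blast
  show "orbit_count (p \<circ> transpose u c) S + 1 = orbit_count p S"
    using orbit_count_comp_transpose_merge[OF assms(1-4) c_notin] .
  have merged: "orbit (p \<circ> transpose u c) u = insert c (orbit p u)"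
    using orbit_comp_transpose_merge[OF assms(1) c_notin] orbit_c by simp
  have "permutation (p \<circ> transpose u c)"
    using assms(1) by (simp add: permutation_compose permutation_swap_id)
  then show "orbit (p \<circ> transpose u c) c = insert c (orbit p u)"
    using merged orbit_eq_if_in_orbit by (metis insertI1)
qed

lemma orbit_count_conj:
  assumes "p permutes S" and "finite S" and "bij_betw h S T"
    and "\<And>y. y \<in> S \<Longrightarrow> \<beta> (h y) = h (p y)"
  shows "orbit_count \<beta> T = orbit_count p S"
proof -
  have "permutation p"
    using assms(1,2) permutation_permutes by blast
  have orbit_image: "orbit \<beta> (h y) = h ` orbit p y" if "y \<in> S" for y
    using orbit_inverse[OF permutation_self_in_orbit[OF \<open>permutation p\<close>]]
      permutes_orbit_subset[OF assms(1) that] assms(4) by blast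
  have "orbit \<beta> ` T = image h ` orbit p ` S"
    using assms(3) orbit_image unfolding bij_betw_def by (auto simp: image_image)
  moreover have "inj_on (image h) (orbit p ` S)"
  proof (rule inj_on_subset)
    show "inj_on (image h) (Pow S)"
      using bij_betw_imp_inj_on[OF assms(3)] by (rule inj_on_image_Pow)
    show "orbit p ` S \<subseteq> Pow S"
      using permutes_orbit_subset[OF assms(1)] by blast
  qed
  ultimately show ?thesis
    unfolding orbit_count_def by (simp add: card_image)
qed

lemma bij_betw_inv_orbit:
  assumes "permutation f"
  shows "bij_betw (inv f) (orbit f a) (orbit f a)"
proof -
  have "inv f ` orbit f a = orbit f a"
  proof
    show "inv f ` orbit f a \<subseteq> orbit f a"
      using orbit_inv_eq[OF assms] orbit.step[of _ "inv f" a] by blast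
    show "orbit f a \<subseteq> inv f ` orbit f a"
    proof
      fix x assume "x \<in> orbit f a"
      then have "f x \<in> orbit f a" by (rule orbit.step)
      moreover have "inv f (f x) = x"
        using assms by (simp add: permutation_bijective bij_is_inj)
      ultimately show "x \<in> inv f ` orbit f a" by (metis imageI)
    qed
  qed
  moreover have "inj_on (inv f) (orbit f a)"
    using assms bij_imp_bij_inv inj_on_subset[of "inv f" UNIV]
    by (metis bij_is_inj permutation_bijective subset_UNIV)
  ultimately show ?thesis
    by (simp add: bij_betw_def)
qed

text \<open>\<open>relabel t\<close> identifies \<open>{0..n}\<close> with the points \<open>{1..n+1}\<close> of \<open>\<alpha>\<^sub>t\<close>: \<open>0\<close> is the
  free leg and \<open>i \<ge> 1\<close> is the old point \<open>i\<close>. Transported along it, \<open>\<alpha>\<^sub>t\<close> becomes \<open>\<gamma>\<close> with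
  the free leg inserted right after \<open>q\<close>.\<close>

definition relabel :: "nat \<Rightarrow> nat \<Rightarrow> nat" where
  "relabel t y = (if y = 0 then t + 1 else ins t y)"

definition insert_after :: "(nat \<Rightarrow> nat) \<Rightarrow> nat option \<Rightarrow> nat \<Rightarrow> nat" where
  "insert_after \<gamma> q = (case q of None \<Rightarrow> \<gamma> | Some q' \<Rightarrow> \<gamma> \<circ> transpose 0 q')"

lemma sigma_permutes: "1 \<le> n \<Longrightarrow> sigma n permutes {1..n}"
  by (rule bij_imp_permutes)
    (auto simp: sigma_def intro!: bij_betw_byWitness[where f' = "\<lambda>i. if i = 1 then n else i - 1"])

lemma sigma_eq_mod: "k \<in> {1..n} \<Longrightarrow> sigma n k = k mod n + 1"
  by (auto simp: sigma_def)

lemma mod_add_one_mem: "1 \<le> n \<Longrightarrow> t mod n + 1 \<in> {1..(n::nat)}"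
  using mod_less_divisor[of n t] by (auto simp: Suc_le_eq)

lemma bij_betw_relabel: "t \<le> n \<Longrightarrow> bij_betw (relabel t) {0..n} {1..Suc n}"
  by (rule bij_betw_byWitness[where f' = "\<lambda>y. if y = t + 1 then 0 else old t y"])
    (auto simp: relabel_def ins_def old_def)

lemma valpha_relabel:
  assumes "\<gamma> permutes {1..n}" and "case q of None \<Rightarrow> True | Some q' \<Rightarrow> q' \<in> {1..n}"
    and "t \<le> n" and "y \<le> n"
  shows "valpha (Suc n) \<gamma> q t (relabel t y) = relabel t (insert_after \<gamma> q y)"
proof -
  have \<gamma>0: "\<gamma> 0 = 0"
    using assms(1) by (rule permutes_not_in) simp
  have \<gamma>_in: "\<gamma> z \<in> {1..n}" if "z \<in> {1..n}" for z
    using permutes_in_image[OF assms(1)] that by blast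
  have \<gamma>y: "y \<noteq> 0 \<Longrightarrow> \<gamma> y \<in> {1..n}"
    using \<gamma>_in assms(4) by simp
  show ?thesis
  proof (cases q)
    case None
    then show ?thesis
      using assms(3,4) \<gamma>0 \<gamma>y
      by (auto simp: valpha_def relabel_def insert_after_def ins_def old_def)
  next
    case (Some q')
    then have "q' \<in> {1..n}" "\<gamma> q' \<in> {1..n}"
      using assms(2) \<gamma>_in by auto
    then show ?thesis
      using Some assms(3,4) \<gamma>0 \<gamma>y
      by (auto simp: valpha_def relabel_def insert_after_def ins_def old_def transpose_def)
  qed
qed

lemma sigma_relabel:
  assumes "1 \<le> n" and "t \<le> n" and "y \<le> n"
  shows "sigma (Suc n) (relabel t y) = relabel t (transpose (t mod n + 1) 0 (sigma n y))"
proof (cases "t = n")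
  case True
  then show ?thesis
    using assms by (auto simp: sigma_def relabel_def ins_def transpose_def)
next
  case False
  then have "t mod n + 1 = t + 1"
    using assms(2) by simp
  then show ?thesis
    using assms by (auto simp: sigma_def relabel_def ins_def transpose_def)
qed

lemma inv_sigma_permutes: "1 \<le> n \<Longrightarrow> inv (sigma n) permutes {0..n}"
  using permutes_inv[OF sigma_permutes] by (rule permutes_subset) auto

lemma inv_sigma_relabel:
  assumes "1 \<le> n" and "t \<le> n" and "y \<le> n"
  shows "inv (sigma (Suc n)) (relabel t y) =
    relabel t (inv (sigma n) (transpose (t mod n + 1) 0 y))"
proof -
  let ?b = "t mod n + 1"
  let ?w = "inv (sigma n) (transpose ?b 0 y)"
  have "?b \<le> n"
    using mod_add_one_mem[OF assms(1)] by simp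
  then have "transpose ?b 0 y \<in> {0..n}"
    using assms(3) by (simp add: transpose_def)
  then have "?w \<le> n"
    using permutes_in_image[OF inv_sigma_permutes[OF assms(1)]] by simp
  have "sigma n ?w = transpose ?b 0 y"
    using permutes_inverses(1)[OF sigma_permutes[OF assms(1)]] .
  then have "sigma (Suc n) (relabel t ?w) = relabel t y"
    using sigma_relabel[OF assms(1,2) \<open>?w \<le> n\<close>] by simp
  then have "inv (sigma (Suc n)) (relabel t y) =
      inv (sigma (Suc n)) (sigma (Suc n) (relabel t ?w))"
    by simp
  also have "\<dots> = relabel t ?w"
    using permutes_inverses(2)[OF sigma_permutes[of "Suc n"]] by simp
  finally show ?thesis .
qed

lemma insert_after_permutes:
  assumes "\<gamma> permutes {1..n}" and "case q of None \<Rightarrow> True | Some q' \<Rightarrow> q' \<in> {1..n}"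
  shows "insert_after \<gamma> q permutes {0..n}"
proof -
  have "\<gamma> permutes {0..n}"
    using assms(1) by (rule permutes_subset) auto
  then show ?thesis
    using assms(2)
    by (auto simp: insert_after_def permutes_compose permutes_swap_id split: option.split)
qed

lemma faces_valpha_conj:
  assumes "1 \<le> n" and "\<gamma> permutes {1..n}" and "case q of None \<Rightarrow> True | Some q' \<Rightarrow> q' \<in> {1..n}"
    and "t \<le> n"
  shows "faces (Suc n) (valpha (Suc n) \<gamma> q t) =
    orbit_count (inv (sigma n) \<circ> transpose (t mod n + 1) 0 \<circ> insert_after \<gamma> q) {0..n}"
  unfolding faces_def ncycles_def orbit_count_def[symmetric]
proof (rule orbit_count_conj)
  have "t mod n + 1 \<le> n"
    using mod_add_one_mem[OF assms(1)] by simp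
  then show "(inv (sigma n) \<circ> transpose (t mod n + 1) 0 \<circ> insert_after \<gamma> q) permutes {0..n}"
    using inv_sigma_permutes[OF assms(1)] insert_after_permutes[OF assms(2,3)]
    by (simp add: permutes_compose permutes_swap_id)
  show "bij_betw (relabel t) {0..n} {1..Suc n}"
    using assms(4) by (rule bij_betw_relabel)
  show "(inv (sigma (Suc n)) \<circ> valpha (Suc n) \<gamma> q t) (relabel t y) =
      relabel t ((inv (sigma n) \<circ> transpose (t mod n + 1) 0 \<circ> insert_after \<gamma> q) y)"
    if "y \<in> {0..n}" for y
    using that permutes_in_image[OF insert_after_permutes[OF assms(2,3)]]
    by (simp add: valpha_relabel[OF assms(2-4)] inv_sigma_relabel[OF assms(1,4)])
qed simp

lemma orbit_count_insert_after:
  assumes "\<rho> permutes {0..n}" and "\<rho> 0 = 0" and "u \<in> {1..n}"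
    and "case q of None \<Rightarrow> True | Some q' \<Rightarrow> q' \<in> {1..n}"
  shows "orbit_count (insert_after (\<rho> \<circ> transpose u 0) q) {0..n} =
    (case q of
      None \<Rightarrow> orbit_count \<rho> {0..n} - 1
    | Some q' \<Rightarrow> if q' \<in> orbit \<rho> u then orbit_count \<rho> {0..n} else orbit_count \<rho> {0..n} - 2)"
proof -
  let ?\<mu> = "\<rho> \<circ> transpose u 0"
  have "permutation \<rho>"
    using assms(1) permutation_permutes by blast
  then have "permutation ?\<mu>"
    by (simp add: permutation_compose permutation_swap_id)
  have u: "u \<in> {0..n}" "u \<noteq> 0"
    using assms(3) by auto
  note merge_fixed =
    orbit_count_comp_transpose_fixed_point[OF \<open>permutation \<rho>\<close> _ u(1) _ assms(2) u(2), simplified]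
  show ?thesis
  proof (cases q)
    case None
    then show ?thesis
      using merge_fixed(1) by (simp add: insert_after_def)
  next
    case (Some q')
    then have q': "q' \<in> {0..n}" "0 \<noteq> q'"
      using assms(4) by auto
    show ?thesis
    proof (cases "q' \<in> orbit \<rho> u")
      case True
      then have "q' \<in> orbit ?\<mu> 0"
        using merge_fixed(2) by simp
      then have "orbit_count (?\<mu> \<circ> transpose 0 q') {0..n} = orbit_count ?\<mu> {0..n} + 1"
        by (intro orbit_count_comp_transpose_split[OF \<open>permutation ?\<mu>\<close> _ _ q']) auto
      then show ?thesis
        using Some True merge_fixed(1) by (simp add: insert_after_def)
    next
      case False
      then have "q' \<notin> orbit ?\<mu> 0"
        using q'(2) merge_fixed(2) by simp
      then have "orbit_count (?\<mu> \<circ> transpose 0 q') {0..n} + 1 = orbit_count ?\<mu> {0..n}"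
        by (intro orbit_count_comp_transpose_merge[OF \<open>permutation ?\<mu>\<close> _ _ q'(1)]) auto
      then show ?thesis
        using Some False merge_fixed(1) by (simp add: insert_after_def)
    qed
  qed
qed

lemma faces_valpha:
  assumes "1 \<le> n" and "\<gamma> permutes {1..n}" and "case q of None \<Rightarrow> True | Some q' \<Rightarrow> q' \<in> {1..n}"
    and "t \<le> n"
  defines "\<rho> \<equiv> inv (sigma n) \<circ> \<gamma>" and "u \<equiv> inv \<gamma> (t mod n + 1)"
  shows "faces (Suc n) (valpha (Suc n) \<gamma> q t) =
    (case q of
      None \<Rightarrow> orbit_count \<rho> {0..n} - 1
    | Some q' \<Rightarrow> if q' \<in> orbit \<rho> u then orbit_count \<rho> {0..n} else orbit_count \<rho> {0..n} - 2)"
proof -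
  let ?b = "t mod n + 1"
  have \<gamma>0: "\<gamma> 0 = 0"
    using assms(2) by (rule permutes_not_in) simp
  have "\<gamma> permutes {0..n}"
    using assms(2) by (rule permutes_subset) auto
  then have "\<rho> permutes {0..n}"
    unfolding \<rho>_def using inv_sigma_permutes[OF assms(1)] by (rule permutes_compose)
  moreover have "\<rho> 0 = 0"
    using permutes_not_in[OF permutes_inv[OF sigma_permutes[OF assms(1)]], of 0] \<gamma>0
    by (simp add: \<rho>_def)
  moreover have "u \<in> {1..n}"
    unfolding u_def using permutes_in_image[OF permutes_inv[OF assms(2)]] mod_add_one_mem[OF assms(1)]
    by blast
  moreover have "inv \<gamma> 0 = 0"
    using \<gamma>0 permutes_inv_eq[OF assms(2)] by metis
  then have "transpose ?b 0 (\<gamma> x) = \<gamma> (transpose u 0 x)" for x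
    using transpose_apply_commute[OF permutes_bij[OF assms(2)]] by (simp add: u_def)
  then have "inv (sigma n) \<circ> transpose ?b 0 \<circ> insert_after \<gamma> q = insert_after (\<rho> \<circ> transpose u 0) q"
    by (simp add: fun_eq_iff insert_after_def \<rho>_def split: option.split)
  ultimately show ?thesis
    using faces_valpha_conj[OF assms(1-4)] orbit_count_insert_after[OF _ _ _ assms(3)] by simp
qed

lemma faces_valpha_pred_eq_inv:
  assumes "1 \<le> n" and "\<gamma> permutes {1..n}" and "case q of None \<Rightarrow> True | Some q' \<Rightarrow> q' \<in> {1..n}"
    and "j \<in> {1..n}"
  shows "faces (Suc n) (valpha (Suc n) \<gamma> q (j - 1)) =
    faces (Suc n) (valpha (Suc n) \<gamma> q (inv \<gamma> j))"
proof -
  let ?\<rho> = "inv (sigma n) \<circ> \<gamma>" and ?k = "inv \<gamma> j"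
  have k: "?k \<in> {1..n}"
    using permutes_in_image[OF permutes_inv[OF assms(2)]] assms(4) by blast
  have "permutation ?\<rho>"
    using assms(1,2) sigma_permutes
    by (metis permutation_compose permutation_inverse permutation_permutes finite_atLeastAtMost)
  have j: "(j - 1) mod n + 1 = j"
    using assms(4) by auto
  have "?\<rho> (inv \<gamma> (?k mod n + 1)) = ?k"
    using sigma_eq_mod[OF k, symmetric] permutes_inverses[OF assms(2)]
      permutes_inverses[OF sigma_permutes[OF assms(1)]]
    by simp
  then have k_step: "orbit ?\<rho> (inv \<gamma> (?k mod n + 1)) = orbit ?\<rho> ?k"
    using permutation_orbit_step[OF \<open>permutation ?\<rho>\<close>] by metis
  have "j - 1 \<le> n" "?k \<le> n"
    using assms(4) k by auto
  show ?thesis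
    unfolding faces_valpha[OF assms(1-3) \<open>j - 1 \<le> n\<close>] faces_valpha[OF assms(1-3) \<open>?k \<le> n\<close>]
      j k_step ..
qed

theorem mainTheorem4:
  fixes m :: nat and \<gamma> :: "nat \<Rightarrow> nat" and q :: "nat option" and a :: nat
    and v :: "nat set"
  assumes "m \<ge> 2"
    and "\<gamma> permutes {1..m-1}"
    and "case q of None \<Rightarrow> True | Some q' \<Rightarrow> q' \<in> {1..m-1}"
    and "a \<in> {1..m-1}"
    and "v = orbit \<gamma> a"
  shows "(\<exists>\<pi>. bij_betw \<pi> v v \<and>
            (\<forall>j\<in>v. faces m (valpha m \<gamma> q (j - 1)) = faces m (valpha m \<gamma> q (\<pi> j))))
       \<and> (\<forall>g :: int \<Rightarrow> complex.
            (\<Sum>j\<in>v. g (int (faces m (valpha m \<gamma> q (j - 1))))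
                   - g (int (faces m (valpha m \<gamma> q j)))) = 0)"
proof -
  define n where "n = m - 1"
  have m: "m = Suc n" and "1 \<le> n"
    using assms(1) by (simp_all add: n_def)
  have \<gamma>: "\<gamma> permutes {1..n}" and q: "case q of None \<Rightarrow> True | Some q' \<Rightarrow> q' \<in> {1..n}"
    using assms(2,3) unfolding n_def .
  have "permutation \<gamma>"
    using \<gamma> permutation_permutes by blast
  have pred_eq: "faces m (valpha m \<gamma> q (j - 1)) = faces m (valpha m \<gamma> q (inv \<gamma> j))"
    if "j \<in> v" for j
  proof -
    have "a \<in> {1..n}"
      using assms(4) unfolding n_def .
    then have "j \<in> {1..n}"
      using that permutes_orbit_subset[OF \<gamma>] assms(5) by blast
    then show ?thesis
      unfolding m by (rule faces_valpha_pred_eq_inv[OF \<open>1 \<le> n\<close> \<gamma> q])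
  qed
  have bij: "bij_betw (inv \<gamma>) v v"
    unfolding assms(5) using \<open>permutation \<gamma>\<close> by (rule bij_betw_inv_orbit)
  have "(\<Sum>j\<in>v. g (int (faces m (valpha m \<gamma> q (j - 1))))) =
      (\<Sum>j\<in>v. g (int (faces m (valpha m \<gamma> q j))))" for g :: "int \<Rightarrow> complex"
    using pred_eq sum.reindex_bij_betw[OF bij, of "\<lambda>j. g (int (faces m (valpha m \<gamma> q j)))"] by simp
  then show ?thesis
    using bij pred_eq by (auto simp: sum_subtractf)
qed

end
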